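(* Let $q$ be a prime number and $l$ a positive integer. Then $\dfrac{1}{q^{s-1}}\in\mathbb{Q}\text{-}\mathcal{KS}(q^{l})$ for every positive integer $s$ dividing $l-1$.
   Context: Every nonzero rational $\alpha$ is written $\alpha=\alpha_1/\alpha_2$ with $\alpha_1\in\mathbb{Z}$, $\alpha_2$ a positive integer and $\gcd(\alpha_1,\alpha_2)=1$. For an integer $N\ge 2$ and a nonzero rational $\alpha=\alpha_1/\alpha_2$, $N$ is called an $\alpha$-Korselt number if $N\neq\alpha$ and $\alpha_2p-\alpha_1$ divides $\alpha_2N-\alpha_1$ (in $\mathbb{Z}$) for every prime divisor $p$ of $N$. $\mathbb{Q}\text{-}\mathcal{KS}(N)$ is the set of all $\beta\in\mathbb{Q}\setminus\{0,N\}$ such that $N$ is a $\beta$-Korselt number. *)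

theory Defs
  imports Complex_Main "HOL-Computational_Algebra.Primes"
begin

text \<open>A nonzero rational alpha is written alpha1/alpha2 in lowest terms with alpha2 > 0;
  this is exactly quotient_of alpha.\<close>

definition alpha_korselt :: "rat \<Rightarrow> nat \<Rightarrow> bool" where
  "alpha_korselt \<alpha> N \<longleftrightarrow>
     N \<ge> 2 \<and> \<alpha> \<noteq> 0 \<and> \<alpha> \<noteq> of_nat N \<and>
     (let (a1, a2) = quotient_of \<alpha> in
        \<forall>p. prime p \<and> p dvd N \<longrightarrow> (a2 * int p - a1) dvd (a2 * int N - a1))"

definition Q_KS :: "nat \<Rightarrow> rat set" where
  "Q_KS N = {\<beta>. \<beta> \<noteq> 0 \<and> \<beta> \<noteq> of_nat N \<and> alpha_korselt \<beta> N}"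

end

theory Submission
  imports Defs
begin

text \<open>For \<open>\<alpha> = 1/q^(s-1)\<close> we have \<open>\<alpha>\<^sub>1 = 1\<close> and \<open>\<alpha>\<^sub>2 = q^(s-1)\<close>, and the only prime
  divisor of \<open>q^l\<close> is \<open>q\<close>. So the Korselt condition says that \<open>q^s - 1\<close> divides
  \<open>q^(s-1+l) - 1\<close>, which holds because \<open>s\<close> divides \<open>s - 1 + l = s + (l - 1)\<close>.\<close>

lemma quotient_of_inverse_of_int:
  assumes "b > 0"
  shows "quotient_of (1 / of_int b) = (1, b)"
proof -
  have "1 / of_int b = Fract 1 b"
    by (simp add: Fract_of_int_quotient)
  then show ?thesis
    using assms by (simp add: quotient_of_Fract normalize_def)
qed

lemma power_diff_1_dvd:
  fixes x :: "'a::comm_ring_1"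
  assumes "s dvd n"
  shows "(x ^ s - 1) dvd (x ^ n - 1)"
proof -
  obtain m where "n = s * m"
    using assms by blast
  then have "x ^ n - 1 = (x ^ s - 1) * (\<Sum>i<m. (x ^ s) ^ i)"
    by (simp only: power_mult power_diff_1_eq)
  then show ?thesis
    by (rule dvdI)
qed

lemma power_pred_mult_diff_1_dvd:
  fixes x :: "'a::comm_ring_1"
  assumes "s > 0" and "l > 0" and "s dvd l - 1"
  shows "(x ^ (s - 1) * x - 1) dvd (x ^ (s - 1) * x ^ l - 1)"
proof -
  have "s - 1 + l = s + (l - 1)"
    using assms(1,2) by simp
  then have "s dvd s - 1 + l"
    using assms(3) by simp
  then have "(x ^ s - 1) dvd (x ^ (s - 1 + l) - 1)"
    by (rule power_diff_1_dvd)
  moreover have "x ^ (s - 1) * x = x ^ s"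
    using assms(1) by (simp flip: power_Suc2)
  ultimately show ?thesis
    by (simp add: power_add)
qed

lemma prime_power_ge_2:
  assumes "prime (q::nat)" and "l > 0"
  shows "q ^ l \<ge> 2"
  using prime_ge_2_nat[OF assms(1)] self_le_power[of q l] assms(2) by linarith

lemma prime_dvd_prime_power_iff:
  assumes "prime (q::nat)" and "l > 0"
  shows "prime p \<and> p dvd q ^ l \<longleftrightarrow> p = q"
  using assms prime_dvd_power primes_dvd_imp_eq by (metis dvd_power)

lemma alpha_korselt_prime_power_iff:
  assumes "prime q" and "l > 0" and "quotient_of \<alpha> = (a1, a2)"
  shows "alpha_korselt \<alpha> (q ^ l) \<longleftrightarrow>
           \<alpha> \<noteq> 0 \<and> \<alpha> \<noteq> of_nat (q ^ l) \<and> (a2 * int q - a1) dvd (a2 * int (q ^ l) - a1)"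
  unfolding alpha_korselt_def assms(3) Let_def prod.case prime_dvd_prime_power_iff[OF assms(1,2)]
  using prime_power_ge_2[OF assms(1,2)] by simp

theorem proposition5p1:
  fixes q l s :: nat
  assumes "prime q" and "l > 0" and "s > 0" and "s dvd (l - 1)"
  shows "1 / (of_nat q) ^ (s - 1) \<in> Q_KS (q ^ l)"
proof -
  let ?\<alpha> = "1 / (of_nat q) ^ (s - 1) :: rat"
  have "q > 0"
    using assms(1) prime_gt_0_nat by blast
  then have "?\<alpha> \<noteq> 0" and "?\<alpha> \<le> 1"
    by simp_all
  moreover have "(of_nat (q ^ l) :: rat) \<ge> 2"
    using prime_power_ge_2[OF assms(1,2)] by (metis of_nat_le_iff of_nat_numeral)
  ultimately have "?\<alpha> \<noteq> of_nat (q ^ l)"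
    by linarith
  have quot: "quotient_of ?\<alpha> = (1, int q ^ (s - 1))"
    using quotient_of_inverse_of_int[of "int q ^ (s - 1)"] \<open>q > 0\<close> by simp
  have "(int q ^ (s - 1) * int q - 1) dvd (int q ^ (s - 1) * int (q ^ l) - 1)"
    using power_pred_mult_diff_1_dvd[OF assms(3,2,4)] by simp
  then have "alpha_korselt ?\<alpha> (q ^ l)"
    using alpha_korselt_prime_power_iff[OF assms(1,2) quot] \<open>?\<alpha> \<noteq> 0\<close> \<open>?\<alpha> \<noteq> of_nat (q ^ l)\<close>
    by blast
  then show ?thesis
    unfolding Q_KS_def using \<open>?\<alpha> \<noteq> 0\<close> \<open>?\<alpha> \<noteq> of_nat (q ^ l)\<close> by blast
qed

end
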